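(* Let $\mathcal{H}$ be a Hilbert space, $H$ self-adjoint on $\mathcal{H}$, and $u:\mathbb{R}^+\to\mathcal{H}$ with $\sup_{t\ge0}\|u(t)\|<\infty$ and $u\in C^1(\mathbb{R}^+,\mathcal{H})\cap C^0(\mathbb{R}^+,{\rm Dom}\,H)$; set $r(t)=\partial_tu(t)+iHu(t)$. Let $t\mapsto M(t)\in B(\mathcal{H})$ have a bounded Heisenberg derivative $\mathcal{D}M(t)$ and suppose: (i) $\sup_t\|M(t)\|<\infty$ and $\|M(\cdot)r(\cdot)\|,\|M^*(\cdot)r(\cdot)\|\in L^1(\mathbb{R}^+,dt)$; (ii) $|(u_1|\mathcal{D}M(t)u_2)|\le\sum_{j=1}^n\|C_j(t)u_1\|\,\|C_j(t)u_2\|$ for all $u_1,u_2\in\mathcal{H}$, with $C_j(t)\in B(\mathcal{H})$ and $\int_{\mathbb{R}^+}\|C_j(t)u(t)\|^2dt<\infty$. Then $\lim_{t\to+\infty}(u(t)|M(t)u(t))$ exists.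
   Context: The Heisenberg derivative is $\mathcal{D}M(t)=\partial_tM(t)+[H,iM(t)]$, where $[H,iM(t)]$, defined as a quadratic form on ${\rm Dom}\,H$, is assumed to extend to a bounded operator. *)

theory Defs
  imports "HOL-Analysis.Analysis"
begin

text \<open>A complex Hilbert space is modelled as a real Banach space 'a together with
  a real-linear map J (multiplication by the imaginary unit) and a complex-valued
  inner product ip, antilinear in the first and linear in the second argument
  (physics convention (u1|u2)), whose induced norm is the norm of 'a.\<close>

definition complex_hilbert :: "('a::banach \<Rightarrow> 'a \<Rightarrow> complex) \<Rightarrow> ('a \<Rightarrow> 'a) \<Rightarrow> bool" where
  "complex_hilbert ip J \<longleftrightarrow>
     linear J \<and> (\<forall>x. J (J x) = - x) \<and>
     (\<forall>x y z. ip x (y + z) = ip x y + ip x z) \<and>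
     (\<forall>x y r. ip x (r *\<^sub>R y) = complex_of_real r * ip x y) \<and>
     (\<forall>x y. ip x (J y) = \<i> * ip x y) \<and>
     (\<forall>x y. ip y x = cnj (ip x y)) \<and>
     (\<forall>x. ip x x = complex_of_real ((norm x)\<^sup>2))"

definition bounded_clin :: "('a::real_normed_vector \<Rightarrow> 'a) \<Rightarrow> ('a \<Rightarrow> 'a) \<Rightarrow> bool" where
  "bounded_clin J A \<longleftrightarrow> bounded_linear A \<and> (\<forall>x. A (J x) = J (A x))"

definition is_adjoint :: "('a \<Rightarrow> 'a \<Rightarrow> complex) \<Rightarrow> ('a \<Rightarrow> 'a) \<Rightarrow> ('a \<Rightarrow> 'a) \<Rightarrow> bool" where
  "is_adjoint ip A B \<longleftrightarrow> (\<forall>x y. ip (B x) y = ip x (A y))"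

text \<open>H with domain D is a (possibly unbounded) self-adjoint operator:
  densely defined complex-linear operator with H = H^* (including equality of domains).\<close>
definition self_adjoint_op ::
  "('a::real_normed_vector \<Rightarrow> 'a \<Rightarrow> complex) \<Rightarrow> ('a \<Rightarrow> 'a) \<Rightarrow> 'a set \<Rightarrow> ('a \<Rightarrow> 'a) \<Rightarrow> bool" where
  "self_adjoint_op ip J D H \<longleftrightarrow>
     subspace D \<and> (\<forall>x\<in>D. J x \<in> D) \<and> closure D = UNIV \<and>
     (\<forall>x\<in>D. \<forall>y\<in>D. H (x + y) = H x + H y) \<and>
     (\<forall>x\<in>D. \<forall>r. H (r *\<^sub>R x) = r *\<^sub>R H x) \<and>
     (\<forall>x\<in>D. H (J x) = J (H x)) \<and>
     D = {y. \<exists>z. \<forall>x\<in>D. ip y (H x) = ip z x} \<and>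
     (\<forall>x\<in>D. \<forall>y\<in>D. ip y (H x) = ip (H y) x)"

end

theory Submission
  imports Defs
begin

text \<open>Along the trajectory, \<open>f(t) = (u(t)|M(t)u(t))\<close> has derivative
  \<open>(u|\<partial>\<^sub>tM u) + (u|M u') + (u'|M u)\<close>. Substituting \<open>u' = r - iHu\<close>, the
  terms containing \<open>H\<close> combine with \<open>\<partial>\<^sub>tM\<close> into the Heisenberg derivative, so
  \<open>f' = (M\<^sup>*r|u) + (u|Mr) + (u|\<D>M u)\<close>. Hypotheses (i) and (ii) bound this
  by an integrable function, hence \<open>f(t) = f(0) + \<integral>\<^sub>0\<^sup>t f'\<close> converges.\<close>

lemma has_vector_derivative_iff_quotient:
  "(f has_vector_derivative D) (at x within S) \<longleftrightarrow>
    ((\<lambda>y. (f y - f x) /\<^sub>R (y - x)) \<longlongrightarrow> D) (at x within S)"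
proof -
  have quotient: "norm ((f y - f x) /\<^sub>R (y - x) - D) = norm (f y - f x - (y - x) *\<^sub>R D) / \<bar>y - x\<bar>"
    if "y \<noteq> x" for y
  proof -
    have "(f y - f x) /\<^sub>R (y - x) - D = (1 / (y - x)) *\<^sub>R (f y - f x - (y - x) *\<^sub>R D)"
      using that by (simp add: scaleR_right_diff_distrib divide_inverse_commute)
    then show ?thesis by simp
  qed
  have "(f has_vector_derivative D) (at x within S) \<longleftrightarrow>
      ((\<lambda>y. norm (f y - f x - (y - x) *\<^sub>R D) / \<bar>y - x\<bar>) \<longlongrightarrow> 0) (at x within S)"
    by (simp add: has_vector_derivative_def has_derivative_iff_norm bounded_linear_scaleR_left)
  also have "\<dots> \<longleftrightarrow> ((\<lambda>y. norm ((f y - f x) /\<^sub>R (y - x) - D)) \<longlongrightarrow> 0) (at x within S)"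
    by (rule Lim_cong_within) (simp_all add: quotient)
  also have "\<dots> \<longleftrightarrow> ((\<lambda>y. (f y - f x) /\<^sub>R (y - x)) \<longlongrightarrow> D) (at x within S)"
    by (simp only: tendsto_norm_zero_iff LIM_zero_iff)
  finally show ?thesis .
qed

lemma tendsto_zero_apply_bounded_family:
  fixes M :: "'i \<Rightarrow> 'a::real_normed_vector \<Rightarrow> 'b::real_normed_vector"
  assumes bound: "\<forall>\<^sub>F s in F. \<forall>v. norm (M s v) \<le> B * norm v" and w: "(w \<longlongrightarrow> 0) F"
  shows "((\<lambda>s. M s (w s)) \<longlongrightarrow> 0) F"
proof (rule Lim_null_comparison)
  show "\<forall>\<^sub>F s in F. norm (M s (w s)) \<le> \<bar>B\<bar> * norm (w s)"
    using bound by eventually_elim (meson abs_ge_self mult_right_mono norm_ge_zero order_trans)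
  show "((\<lambda>s. \<bar>B\<bar> * norm (w s)) \<longlongrightarrow> 0) F"
    using tendsto_mult_right_zero[OF tendsto_norm_zero[OF w]] .
qed

text \<open>Only strong differentiability of \<open>M\<close> is assumed; the uniform bound on \<open>M s\<close>
  stands in for continuity in operator norm.\<close>

lemma has_vector_derivative_apply_family:
  fixes M :: "real \<Rightarrow> 'a::real_normed_vector \<Rightarrow> 'b::real_normed_vector"
  assumes bound: "\<And>s v. s \<in> S \<Longrightarrow> norm (M s v) \<le> B * norm v"
    and lin: "\<And>s. s \<in> S \<Longrightarrow> linear (M s)"
    and M': "\<And>v. ((\<lambda>s. M s v) has_vector_derivative M' v) (at t within S)"
    and u': "(u has_vector_derivative u') (at t within S)"
  shows "((\<lambda>s. M s (u s)) has_vector_derivative M' (u t) + M t u') (at t within S)"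
  unfolding has_vector_derivative_iff_quotient
proof -
  have in_S: "\<forall>\<^sub>F s in at t within S. s \<in> S"
    by (simp add: eventually_at_filter)
  have "\<forall>\<^sub>F s in at t within S. \<forall>v. norm (M s v) \<le> B * norm v"
    using in_S by (rule eventually_mono) (simp add: bound)
  moreover have "((\<lambda>s. (u s - u t) /\<^sub>R (s - t) - u') \<longlongrightarrow> 0) (at t within S)"
    using u' unfolding has_vector_derivative_iff_quotient by (rule LIM_zero)
  ultimately have "((\<lambda>s. M s ((u s - u t) /\<^sub>R (s - t) - u')) \<longlongrightarrow> 0) (at t within S)"
    by (rule tendsto_zero_apply_bounded_family)
  moreover have "((\<lambda>s. M s u') \<longlongrightarrow> M t u') (at t within S)"
    using has_vector_derivative_continuous[OF M'] by (simp add: continuous_within)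
  moreover have "((\<lambda>s. (M s (u t) - M t (u t)) /\<^sub>R (s - t)) \<longlongrightarrow> M' (u t)) (at t within S)"
    using M' unfolding has_vector_derivative_iff_quotient .
  ultimately have "((\<lambda>s. M s ((u s - u t) /\<^sub>R (s - t) - u') + M s u'
      + (M s (u t) - M t (u t)) /\<^sub>R (s - t)) \<longlongrightarrow> 0 + M t u' + M' (u t)) (at t within S)"
    by (intro tendsto_add)
  moreover have "\<forall>\<^sub>F s in at t within S. M s ((u s - u t) /\<^sub>R (s - t) - u') + M s u'
      + (M s (u t) - M t (u t)) /\<^sub>R (s - t) = (M s (u s) - M t (u t)) /\<^sub>R (s - t)"
    using in_S
  proof eventually_elim
    case (elim s)
    then have "M s ((u s - u t) /\<^sub>R (s - t) - u') = (M s (u s) - M s (u t)) /\<^sub>R (s - t) - M s u'"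
      using lin by (simp add: linear_diff linear_scale)
    then show ?case
      by (simp add: scaleR_diff_right)
  qed
  ultimately show "((\<lambda>s. (M s (u s) - M t (u t)) /\<^sub>R (s - t)) \<longlongrightarrow> M' (u t) + M t u') (at t within S)"
    by (simp add: Lim_transform_eventually add.commute)
qed

lemma norm_le_of_onorm_le:
  assumes "bounded_linear A" and "onorm A \<le> B"
  shows "norm (A v) \<le> B * norm v"
  using assms onorm[of A v] by (meson mult_right_mono norm_ge_zero order_trans)

lemma convergent_at_top_if_derivative_dominated:
  fixes f :: "real \<Rightarrow> 'a::euclidean_space"
  assumes f': "\<And>t. t \<ge> 0 \<Longrightarrow> (f has_vector_derivative f' t) (at t within {0..})"
    and dom: "\<And>t. t \<in> {0..} \<Longrightarrow> norm (f' t) \<le> g t"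
    and g: "g integrable_on {0..}"
  shows "\<exists>L. (f \<longlongrightarrow> L) at_top"
proof -
  have ftc: "(f' has_integral (f b - f 0)) {0..b}" if "b \<ge> 0" for b
    by (rule fundamental_theorem_of_calculus[OF that])
       (auto intro: has_vector_derivative_within_subset[OF f'])
  have "f' integrable_on {0..}"
  proof (rule integrable_on_all_intervals_integrable_bound[OF _ dom g])
    fix a b :: real
    show "(\<lambda>x. if x \<in> {0..} then f' x else 0) integrable_on cbox a b"
      unfolding integrable_restrict_Int cbox_interval
    proof (cases "max 0 a \<le> b")
      case True
      then have "f' integrable_on {0..b}" using ftc by auto
      moreover have "{0..} \<inter> {a..b} = {max 0 a..b}" by auto
      ultimately show "f' integrable_on {0..} \<inter> {a..b}"
        using integrable_subinterval_real True by fastforce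
    next
      case False
      then have "{0..} \<inter> {a..b} = {}" by auto
      then show "f' integrable_on {0..} \<inter> {a..b}" by (simp only: integrable_on_empty)
    qed
  qed
  then have f'_abs: "f' absolutely_integrable_on {0..}"
    using absolutely_integrable_integrable_bound[OF dom _ g] by blast
  then have "((\<lambda>b. LINT x:{0..b}|lebesgue. f' x) \<longlongrightarrow> (LINT x:{0..}|lebesgue. f' x)) at_top"
    by (intro tendsto_set_lebesgue_integral_at_top) auto
  moreover have "\<forall>\<^sub>F b in at_top. (LINT x:{0..b}|lebesgue. f' x) = f b - f 0"
    using eventually_ge_at_top[of "0::real"]
  proof eventually_elim
    case (elim b)
    have "set_integrable lebesgue {0..b} f'"
      by (rule set_integrable_subset[OF f'_abs]) auto
    then have "(LINT x:{0..b}|lebesgue. f' x) = integral {0..b} f'"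
      by (rule set_lebesgue_integral_eq_integral)
    also have "\<dots> = f b - f 0"
      by (rule integral_unique[OF ftc[OF elim]])
    finally show ?case .
  qed
  ultimately have "((\<lambda>b. f b - f 0) \<longlongrightarrow> (LINT x:{0..}|lebesgue. f' x)) at_top"
    by (rule Lim_transform_eventually)
  from tendsto_add[OF this tendsto_const[of "f 0"]]
  have "(f \<longlongrightarrow> (LINT x:{0..}|lebesgue. f' x) + f 0) at_top"
    by simp
  then show ?thesis ..
qed

context
  fixes ip :: "'a::banach \<Rightarrow> 'a \<Rightarrow> complex" and J :: "'a \<Rightarrow> 'a"
  assumes hilb: "complex_hilbert ip J"
begin

lemma ip_add_right: "ip x (y + z) = ip x y + ip x z"
  and ip_scaleR_right: "ip x (r *\<^sub>R y) = of_real r * ip x y"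
  and ip_J_right: "ip x (J y) = \<i> * ip x y"
  and ip_commute_cnj: "ip y x = cnj (ip x y)"
  and ip_self: "ip x x = of_real ((norm x)\<^sup>2)"
  using hilb unfolding complex_hilbert_def by blast+

lemma ip_add_left: "ip (x + y) z = ip x z + ip y z"
  by (metis complex_cnj_add ip_add_right ip_commute_cnj)

lemma ip_scaleR_left: "ip (r *\<^sub>R x) y = of_real r * ip x y"
  by (metis complex_cnj_complex_of_real complex_cnj_mult ip_commute_cnj ip_scaleR_right)

lemma ip_J_left: "ip (J x) y = - \<i> * ip x y"
  by (metis complex_cnj_i complex_cnj_mult ip_J_right ip_commute_cnj mult_minus_left)

lemma ip_minus_right: "ip x (- y) = - ip x y"
  using ip_scaleR_right[of x "-1" y] by simp

lemma Re_ip_le: "Re (ip x y) \<le> norm x * norm y"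
proof -
  have "ip (x + y) (x + y) = ip x x + ip x y + ip y x + ip y y"
    by (simp add: ip_add_left ip_add_right add.assoc)
  then have "(norm (x + y))\<^sup>2 = Re (ip x x + ip x y + cnj (ip x y) + ip y y)"
    by (metis Re_complex_of_real ip_commute_cnj ip_self)
  also have "\<dots> = (norm x)\<^sup>2 + (norm y)\<^sup>2 + 2 * Re (ip x y)"
    by (simp add: ip_self)
  finally have "(norm (x + y))\<^sup>2 = (norm x)\<^sup>2 + (norm y)\<^sup>2 + 2 * Re (ip x y)" .
  moreover have "(norm (x + y))\<^sup>2 \<le> (norm x + norm y)\<^sup>2"
    by (simp add: norm_triangle_ineq power_mono)
  ultimately show ?thesis by (simp add: power2_eq_square algebra_simps)
qed

lemma abs_Re_ip_le: "\<bar>Re (ip x y)\<bar> \<le> norm x * norm y"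
  using Re_ip_le[of x y] Re_ip_le[of x "- y"] ip_minus_right[of x y] by auto

lemma norm_J: "norm (J x) = norm x"
proof -
  have "ip (J x) (J x) = ip x x"
    by (simp add: ip_J_left ip_J_right)
  then show ?thesis
    by (metis ip_self norm_ge_zero of_real_eq_iff power2_eq_iff_nonneg)
qed

text \<open>The factor 2 (instead of the sharp Cauchy--Schwarz constant 1) comes from
  estimating real and imaginary parts separately; it is all that is needed here.\<close>

lemma norm_ip_le: "cmod (ip x y) \<le> 2 * norm x * norm y"
proof -
  have "\<bar>Im (ip x y)\<bar> = \<bar>Re (ip x (J y))\<bar>"
    by (simp add: ip_J_right)
  also have "\<dots> \<le> norm x * norm y"
    using abs_Re_ip_le[of x "J y"] by (simp add: norm_J)
  finally show ?thesis
    using cmod_le[of "ip x y"] abs_Re_ip_le[of x y] by simp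
qed

lemma bounded_bilinear_ip: "bounded_bilinear ip"
proof
  show "\<exists>K. \<forall>a b. norm (ip a b) \<le> norm a * norm b * K"
    using norm_ip_le by (intro exI[of _ 2]) (simp add: ac_simps)
qed (auto simp: ip_add_left ip_add_right ip_scaleR_left ip_scaleR_right scaleR_conv_of_real)

lemma norm_ip_add_ip_le:
  assumes "norm x \<le> U"
  shows "cmod (ip a x + ip x b + c) \<le> 2 * U * (norm a + norm b) + cmod c"
proof -
  have "cmod (ip a x) \<le> 2 * U * norm a"
    using norm_ip_le[of a x] mult_left_mono[OF assms, of "2 * norm a"] by (simp add: ac_simps)
  moreover have "cmod (ip x b) \<le> 2 * U * norm b"
    using norm_ip_le[of x b] mult_left_mono[OF assms, of "2 * norm b"] by (simp add: ac_simps)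
  ultimately show ?thesis
    using norm_triangle_ineq[of "ip a x + ip x b" c] norm_triangle_ineq[of "ip a x" "ip x b"]
    by (simp add: distrib_left)
qed

lemma ip_derivative_eq_heisenberg:
  assumes A: "bounded_clin J A" and As: "is_adjoint ip A As"
    and heis: "ip x DAx = ip x dAx + \<i> * (ip Hx (A x) - ip x (A Hx))"
  shows "ip x (dAx + A v) + ip v (A x) = ip (As (v + J Hx)) x + ip x (A (v + J Hx)) + ip x DAx"
proof -
  have "A (v + J Hx) = A v + J (A Hx)"
    using A by (simp add: bounded_clin_def linear_add bounded_linear.linear)
  moreover have "ip (As (v + J Hx)) x = ip v (A x) - \<i> * ip Hx (A x)"
    using As by (simp add: is_adjoint_def ip_add_left ip_J_left)
  ultimately show ?thesis
    unfolding heis by (simp add: ip_add_right ip_J_right algebra_simps)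
qed

end

theorem lemmaA2:
  fixes ip :: "'a::banach \<Rightarrow> 'a \<Rightarrow> complex"
    and J :: "'a \<Rightarrow> 'a"
    and D :: "'a set" and H :: "'a \<Rightarrow> 'a"
    and u u' :: "real \<Rightarrow> 'a"
    and M Ms dM DM :: "real \<Rightarrow> 'a \<Rightarrow> 'a"
    and n :: nat and C :: "nat \<Rightarrow> real \<Rightarrow> 'a \<Rightarrow> 'a"
  assumes hilb: "complex_hilbert ip J"
    and sa: "self_adjoint_op ip J D H"
    and u_bdd: "bounded (u ` {0..})"
    and u_deriv: "\<And>t. t \<ge> 0 \<Longrightarrow> (u has_vector_derivative u' t) (at t within {0..})"
    and u'_cont: "continuous_on {0..} u'"
    and u_dom: "\<And>t. t \<ge> 0 \<Longrightarrow> u t \<in> D"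
    and Hu_cont: "continuous_on {0..} (\<lambda>t. H (u t))"
    and M_bdd_op: "\<And>t. t \<ge> 0 \<Longrightarrow> bounded_clin J (M t)"
    and M_deriv: "\<And>t v. t \<ge> 0 \<Longrightarrow> ((\<lambda>s. M s v) has_vector_derivative dM t v) (at t within {0..})"
    and dM_bdd_op: "\<And>t. t \<ge> 0 \<Longrightarrow> bounded_clin J (dM t)"
    and DM_bdd_op: "\<And>t. t \<ge> 0 \<Longrightarrow> bounded_clin J (DM t)"
    and DM_heis: "\<And>t u1 u2. t \<ge> 0 \<Longrightarrow> u1 \<in> D \<Longrightarrow> u2 \<in> D \<Longrightarrow>
        ip u1 (DM t u2) = ip u1 (dM t u2) + \<i> * (ip (H u1) (M t u2) - ip u1 (M t (H u2)))"
    and M_unif: "\<exists>B. \<forall>t\<ge>0. onorm (M t) \<le> B"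
    and Ms_adj: "\<And>t. t \<ge> 0 \<Longrightarrow> is_adjoint ip (M t) (Ms t)"
    and Mr_int: "(\<lambda>t. norm (M t (u' t + J (H (u t))))) integrable_on {0..}"
    and Msr_int: "(\<lambda>t. norm (Ms t (u' t + J (H (u t))))) integrable_on {0..}"
    and C_bdd_op: "\<And>j t. j \<in> {1..n} \<Longrightarrow> t \<ge> 0 \<Longrightarrow> bounded_clin J (C j t)"
    and DM_est: "\<And>t u1 u2. t \<ge> 0 \<Longrightarrow>
        cmod (ip u1 (DM t u2)) \<le> (\<Sum>j=1..n. norm (C j t u1) * norm (C j t u2))"
    and C_int: "\<And>j. j \<in> {1..n} \<Longrightarrow> (\<lambda>t. (norm (C j t (u t)))\<^sup>2) integrable_on {0..}"
  shows "\<exists>L. ((\<lambda>t. ip (u t) (M t (u t))) \<longlongrightarrow> L) at_top"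
proof -
  obtain B where B: "\<And>t. t \<ge> 0 \<Longrightarrow> onorm (M t) \<le> B" using M_unif by auto
  obtain U where U: "\<And>t. t \<ge> 0 \<Longrightarrow> norm (u t) \<le> U" using u_bdd unfolding bounded_iff by auto
  define r where "r t = u' t + J (H (u t))" for t
  define f' where "f' t = ip (Ms t (r t)) (u t) + ip (u t) (M t (r t)) + ip (u t) (DM t (u t))" for t
  define g where "g t = 2 * U * (norm (Ms t (r t)) + norm (M t (r t)))
    + (\<Sum>j=1..n. (norm (C j t (u t)))\<^sup>2)" for t
  show ?thesis
  proof (rule convergent_at_top_if_derivative_dominated[where f'=f' and g=g])
    fix t :: real assume t: "t \<ge> 0"
    have "((\<lambda>s. M s (u s)) has_vector_derivative dM t (u t) + M t (u' t)) (at t within {0..})"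
      using M_bdd_op B M_deriv[OF t] u_deriv[OF t]
      by (intro has_vector_derivative_apply_family[where B=B])
        (auto simp: bounded_clin_def bounded_linear.linear norm_le_of_onorm_le)
    from bounded_bilinear.has_vector_derivative[OF bounded_bilinear_ip[OF hilb] u_deriv[OF t] this]
    show "((\<lambda>t. ip (u t) (M t (u t))) has_vector_derivative f' t) (at t within {0..})"
      unfolding f'_def r_def
      by (rule has_vector_derivative_eq_rhs) (rule ip_derivative_eq_heisenberg[OF hilb
          M_bdd_op[OF t] Ms_adj[OF t] DM_heis[OF t u_dom[OF t] u_dom[OF t]]])
  next
    fix t :: real assume "t \<in> {0..}"
    then have "cmod (ip (u t) (DM t (u t))) \<le> (\<Sum>j=1..n. (norm (C j t (u t)))\<^sup>2)"
      using DM_est[of t "u t" "u t"] by (simp add: power2_eq_square)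
    with \<open>t \<in> {0..}\<close> show "norm (f' t) \<le> g t"
      unfolding f'_def g_def using norm_ip_add_ip_le[OF hilb U]
      by (meson add_left_mono atLeast_iff order_trans)
  next
    show "g integrable_on {0..}"
      unfolding g_def r_def
      using integrable_add[OF integrable_cmul[OF integrable_add[OF Msr_int Mr_int], of "2 * U"]
          integrable_sum[OF finite_atLeastAtMost C_int]] by simp
  qed
qed

end
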